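(* Let $X$ be a Banach space and $(A_m)_{m\in\mathbb{Z}}$ a sequence of invertible bounded linear operators on $X$ with $\sup_m\lVert A_m\rVert<\infty$ admitting an exponential dichotomy; let $c>0$ be a constant as described in the context (with $B=l^\infty$), and fix $D,r>0$. Then there exists $\delta>0$ such that the following holds. Let $g_n\colon X\to X$, $n\in\mathbb{Z}$, be differentiable maps with $\lVert d_xg_n\rVert\le c/2$, $\lVert d_xg_n-d_yg_n\rVert\le D\lVert x-y\rVert^r$ for all $x,y\in X$, $n\in\mathbb{Z}$, and $\sup_{x\in X}\lVert g_n(x)\rVert\le\delta$ for all $n$. If $(y_n)_{n\in\mathbb{Z}}\subset X$ satisfies $y_{n+1}=A_ny_n+g_n(y_n)$ for all $n\in\mathbb{Z}$ and $$\lambda:=\limsup_{n\to\infty}\frac1n\log\lVert y_n\rVert>0,$$ then there exists $(x_n)_{n\in\mathbb{Z}}\subset X$ with $x_{n+1}=A_nx_n$ for all $n\in\mathbb{Z}$ and $\lambda=\limsup_{n\to\infty}\frac1n\log\lVert x_n\rVert$.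
   Context: Exponential dichotomy: with $\mathcal A(m,n)=A_{m-1}\cdots A_n$ ($m>n$), $\mathrm{Id}$ ($m=n$), $A_m^{-1}\cdots A_{n-1}^{-1}$ ($m<n$), there exist projections $P_m$ with $P_{m+1}A_m=A_mP_m$ and $C,\lambda_0>0$ with $\lVert\mathcal A(m,n)P_n\rVert\le Ce^{-\lambda_0(m-n)}$ ($m\ge n$) and $\lVert\mathcal A(m,n)(\mathrm{Id}-P_n)\rVert\le Ce^{-\lambda_0(n-m)}$ ($m\le n$). The constant $c>0$ is such that there is $K>0$ for which every sequence $(B_m)$ of bounded operators on $X$ with $\sup_m\lVert A_m-B_m\rVert\le c$ admits an exponential dichotomy and the operator $(\mathbb B\mathbf x)_n=B_{n-1}x_{n-1}$ on the space of bounded sequences $(x_n)_{n\in\mathbb{Z}}\subset X$ with the sup norm has $\mathrm{Id}-\mathbb B$ invertible with $\lVert(\mathrm{Id}-\mathbb B)^{-1}\rVert\le K$. *)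

theory Defs
  imports "HOL-Analysis.Analysis"
begin

definition binvertible :: "('a::real_normed_vector \<Rightarrow>\<^sub>L 'a) \<Rightarrow> bool" where
  "binvertible T \<longleftrightarrow> (\<exists>S. T o\<^sub>L S = id_blinfun \<and> S o\<^sub>L T = id_blinfun)"

definition binv :: "('a::real_normed_vector \<Rightarrow>\<^sub>L 'a) \<Rightarrow> ('a \<Rightarrow>\<^sub>L 'a)" where
  "binv T = (SOME S. T o\<^sub>L S = id_blinfun \<and> S o\<^sub>L T = id_blinfun)"

fun prodA :: "(int \<Rightarrow> ('a::real_normed_vector \<Rightarrow>\<^sub>L 'a)) \<Rightarrow> int \<Rightarrow> nat \<Rightarrow> ('a \<Rightarrow>\<^sub>L 'a)" where
  "prodA A n 0 = id_blinfun"
| "prodA A n (Suc k) = A (n + int k) o\<^sub>L prodA A n k"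

text \<open>The cocycle: A(m,n) = A_{m-1}...A_n for m \<ge> n, and
  A_m^{-1}...A_{n-1}^{-1} = (A_{n-1}...A_m)^{-1} for m < n.\<close>
definition cocycle :: "(int \<Rightarrow> ('a::real_normed_vector \<Rightarrow>\<^sub>L 'a)) \<Rightarrow> int \<Rightarrow> int \<Rightarrow> ('a \<Rightarrow>\<^sub>L 'a)" where
  "cocycle A m n = (if n \<le> m then prodA A n (nat (m - n)) else binv (prodA A m (nat (n - m))))"

definition exp_dichotomy :: "(int \<Rightarrow> ('a::real_normed_vector \<Rightarrow>\<^sub>L 'a)) \<Rightarrow> bool" where
  "exp_dichotomy A \<longleftrightarrow> (\<forall>m. binvertible (A m)) \<and>
     (\<exists>P C lam0. C > 0 \<and> lam0 > 0 \<and>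
        (\<forall>m. P m o\<^sub>L P m = P m) \<and>
        (\<forall>m. P (m + 1) o\<^sub>L A m = A m o\<^sub>L P m) \<and>
        (\<forall>m n. n \<le> m \<longrightarrow> norm (cocycle A m n o\<^sub>L P n) \<le> C * exp (- lam0 * real_of_int (m - n))) \<and>
        (\<forall>m n. m \<le> n \<longrightarrow> norm (cocycle A m n o\<^sub>L (id_blinfun - P n)) \<le> C * exp (- lam0 * real_of_int (n - m))))"

text \<open>(Id - \<bbbB>) is invertible on l^\<infinity>(\<int>, X) with inverse of norm \<le> K, where
  (\<bbbB> x)_n = B_{n-1} x_{n-1}.\<close>
definition linf_invertible :: "(int \<Rightarrow> ('a::real_normed_vector \<Rightarrow>\<^sub>L 'a)) \<Rightarrow> real \<Rightarrow> bool" where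
  "linf_invertible B K \<longleftrightarrow>
     (\<forall>y::int \<Rightarrow> 'a. bounded (range y) \<longrightarrow>
        (\<exists>!x::int \<Rightarrow> 'a. bounded (range x) \<and> (\<forall>n. x n - B (n - 1) (x (n - 1)) = y n)) \<and>
        (\<forall>x::int \<Rightarrow> 'a. bounded (range x) \<and> (\<forall>n. x n - B (n - 1) (x (n - 1)) = y n) \<longrightarrow>
           (SUP n. norm (x n)) \<le> K * (SUP n. norm (y n))))"

definition admissible_const :: "(int \<Rightarrow> ('a::real_normed_vector \<Rightarrow>\<^sub>L 'a)) \<Rightarrow> real \<Rightarrow> bool" where
  "admissible_const A c \<longleftrightarrow> c > 0 \<and>
     (\<exists>K>0. \<forall>B. (\<forall>m. norm (A m - B m) \<le> c) \<longrightarrow> exp_dichotomy B \<and> linf_invertible B K)"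

definition growth_rate :: "(int \<Rightarrow> 'a::real_normed_vector) \<Rightarrow> ereal" where
  "growth_rate y = limsup (\<lambda>n::nat. if y (int n) = 0 then -\<infinity> else ereal (ln (norm (y (int n))) / real n))"

end

theory Submission imports Defs begin

text \<open>The perturbation \<open>g\<^sub>n(y\<^sub>n)\<close> is bounded by \<open>\<delta>\<close>, so invertibility of
  \<open>Id - \<bbbA>\<close> on \<open>l\<^sup>\<infinity>\<close> yields a bounded sequence \<open>z\<close> with \<open>z\<^sub>n\<^sub>+\<^sub>1 = A\<^sub>n z\<^sub>n + g\<^sub>n(y\<^sub>n)\<close>.
  Then \<open>x = y - z\<close> is an orbit of the linear system within bounded distance of \<open>y\<close>, and a
  bounded perturbation cannot change a positive exponential growth rate: if \<open>\<parallel>y\<^sub>n\<parallel> > e\<^sup>t\<^sup>n\<close>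
  infinitely often and \<open>\<parallel>x\<^sub>n - y\<^sub>n\<parallel> \<le> M\<close>, then \<open>\<parallel>x\<^sub>n\<parallel> > e\<^sup>s\<^sup>n\<close> infinitely often for every
  \<open>0 \<le> s < t\<close>.\<close>

lemma eventually_le_exp_diff:
  fixes s t M :: real
  assumes "0 \<le> s" "s < t"
  shows "eventually (\<lambda>n::nat. M \<le> exp (t * real n) - exp (s * real n)) sequentially"
proof -
  obtain N :: nat where N: "M / (t - s) \<le> real N" using real_arch_simple by blast
  have "M \<le> exp (t * real n) - exp (s * real n)" if "N \<le> n" for n
  proof -
    have "M \<le> (t - s) * real N" using N assms by (simp add: pos_divide_le_eq mult.commute)
    also have "\<dots> \<le> (t - s) * real n" using that assms by (intro mult_left_mono) auto
    also have "\<dots> \<le> exp ((t - s) * real n) - 1"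
      using exp_ge_add_one_self[of "(t - s) * real n"] by linarith
    also have "\<dots> \<le> exp (s * real n) * (exp ((t - s) * real n) - 1)"
      using mult_right_mono[of 1 "exp (s * real n)" "exp ((t - s) * real n) - 1"] assms by simp
    also have "\<dots> = exp (t * real n) - exp (s * real n)"
      by (simp add: algebra_simps flip: exp_add)
    finally show ?thesis .
  qed
  then show ?thesis unfolding eventually_sequentially by blast
qed

lemma frequently_exp_less_norm_if_less_growth_rate:
  fixes y :: "int \<Rightarrow> 'a::real_normed_vector"
  assumes "0 \<le> t" "ereal t < growth_rate y"
  shows "frequently (\<lambda>n. exp (t * real n) < norm (y (int n))) sequentially"
proof -
  define a where "a n = (if y (int n) = 0 then -\<infinity> else ereal (ln (norm (y (int n))) / real n))"
    for n :: nat
  have "\<not> limsup a \<le> ereal t" using assms(2) unfolding growth_rate_def a_def by auto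
  then obtain w where "ereal t < w" "\<not> eventually (\<lambda>n. a n < w) sequentially"
    using Limsup_le_iff[of sequentially a "ereal t"] by auto
  then have "frequently (\<lambda>n. ereal t < a n) sequentially"
    by (auto simp: not_eventually elim!: frequently_elim1)
  then show ?thesis
  proof (rule frequently_elim1)
    fix n assume tn: "ereal t < a n"
    then have y0: "y (int n) \<noteq> 0" and "t < ln (norm (y (int n))) / real n"
      unfolding a_def by (auto split: if_splits)
    moreover have "0 < n" using calculation assms(1) by (cases n) auto
    ultimately have "t * real n < ln (norm (y (int n)))" by (simp add: pos_less_divide_eq)
    then show "exp (t * real n) < norm (y (int n))"
      using y0 by (metis exp_less_mono exp_ln zero_less_norm_iff)
  qed
qed

lemma eventually_norm_le_exp_if_growth_rate_less:
  fixes x :: "int \<Rightarrow> 'a::real_normed_vector"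
  assumes "growth_rate x < ereal s"
  shows "eventually (\<lambda>n. norm (x (int n)) \<le> exp (s * real n)) sequentially"
proof -
  define b where "b n = (if x (int n) = 0 then -\<infinity> else ereal (ln (norm (x (int n))) / real n))"
    for n :: nat
  have "eventually (\<lambda>n. b n < ereal s) sequentially"
    using assms unfolding growth_rate_def b_def by (intro Limsup_lessD) auto
  with eventually_gt_at_top[of 0] show ?thesis
  proof eventually_elim
    case (elim n)
    show ?case
    proof (cases "x (int n) = 0")
      case False
      with elim have "ln (norm (x (int n))) < s * real n"
        unfolding b_def by (simp add: divide_less_eq)
      with False show ?thesis by (metis exp_less_mono exp_ln zero_less_norm_iff less_imp_le)
    qed simp
  qed
qed

lemma growth_rate_le_if_bounded_diff:
  fixes x y :: "int \<Rightarrow> 'a::real_normed_vector"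
  assumes M: "\<And>n. norm (x n - y n) \<le> M" and pos: "0 < growth_rate y"
  shows "growth_rate y \<le> growth_rate x"
proof (rule ccontr)
  assume "\<not> growth_rate y \<le> growth_rate x"
  then have "max (growth_rate x) 0 < growth_rate y" using pos by auto
  then obtain s t where s: "max (growth_rate x) 0 < ereal s" and st: "ereal s < ereal t"
    and t: "ereal t < growth_rate y"
    using ereal_dense2 by (metis order.strict_trans)
  have "0 \<le> s" "s < t" using s st by auto
  have "frequently (\<lambda>n. exp (t * real n) < norm (y (int n))) sequentially"
    using t \<open>0 \<le> s\<close> \<open>s < t\<close> by (intro frequently_exp_less_norm_if_less_growth_rate) auto
  moreover have "eventually (\<lambda>n. norm (x (int n)) \<le> exp (s * real n)) sequentially"
    using s by (intro eventually_norm_le_exp_if_growth_rate_less) auto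
  moreover have "eventually (\<lambda>n::nat. M \<le> exp (t * real n) - exp (s * real n)) sequentially"
    using \<open>0 \<le> s\<close> \<open>s < t\<close> by (rule eventually_le_exp_diff)
  ultimately have "frequently (\<lambda>n. exp (t * real n) < norm (y (int n)) \<and>
      norm (x (int n)) \<le> exp (s * real n) \<and> M \<le> exp (t * real n) - exp (s * real n)) sequentially"
    by (rule frequently_eventually_frequently[OF _ eventually_conj])
  then have "frequently (\<lambda>n. M < norm (x (int n) - y (int n))) sequentially"
  proof (rule frequently_elim1)
    fix n :: nat
    have "norm (y (int n)) - norm (x (int n)) \<le> norm (x (int n) - y (int n))"
      using norm_triangle_ineq2[of "y (int n)" "x (int n)"] by (simp add: norm_minus_commute)
    then show "exp (t * real n) < norm (y (int n)) \<and> norm (x (int n)) \<le> exp (s * real n) \<and>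
        M \<le> exp (t * real n) - exp (s * real n) \<Longrightarrow> M < norm (x (int n) - y (int n))"
      by linarith
  qed
  then show False by (simp add: frequently_def not_less M)
qed

lemma growth_rate_eq_if_bounded_diff:
  fixes x y :: "int \<Rightarrow> 'a::real_normed_vector"
  assumes "bounded (range (\<lambda>n. x n - y n))" and "0 < growth_rate y"
  shows "growth_rate x = growth_rate y"
proof -
  obtain M where M: "\<And>n. norm (x n - y n) \<le> M" using assms(1) unfolding bounded_iff by blast
  then have M': "\<And>n. norm (y n - x n) \<le> M" by (simp add: norm_minus_commute)
  have "growth_rate y \<le> growth_rate x" using M assms(2) by (rule growth_rate_le_if_bounded_diff)
  moreover have "growth_rate x \<le> growth_rate y"
    using M' assms(2) calculation by (intro growth_rate_le_if_bounded_diff) auto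
  ultimately show ?thesis by simp
qed

lemma linf_invertible_shadowing_orbit:
  assumes "linf_invertible A K"
    and y: "\<And>n. y (n + 1) = A n (y n) + f n" and "bounded (range f)"
  obtains x where "\<And>n. x (n + 1) = A n (x n)" and "bounded (range (\<lambda>n. x n - y n))"
proof -
  have "bounded (range (\<lambda>n. f (n - 1)))"
    using assms(3) by (rule bounded_subset) auto
  then obtain z where z_bounded: "bounded (range z)"
    and z: "\<And>n. z n - A (n - 1) (z (n - 1)) = f (n - 1)"
    using assms(1) unfolding linf_invertible_def by blast
  have "y (n + 1) - z (n + 1) = A n (y n - z n)" for n
    using y[of n] z[of "n + 1"] by (simp add: blinfun.diff_right algebra_simps)
  moreover have "range (\<lambda>n. (y n - z n) - y n) = uminus ` range z" by auto
  then have "bounded (range (\<lambda>n. (y n - z n) - y n))" using z_bounded by simp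
  ultimately show thesis using that[of "\<lambda>n. y n - z n"] by blast
qed

lemma admissible_const_linf_invertible:
  assumes "admissible_const A c"
  obtains K where "linf_invertible A K"
proof -
  obtain K where "\<And>B. (\<forall>m. norm (A m - B m) \<le> c) \<Longrightarrow> linf_invertible B K" "c > 0"
    using assms unfolding admissible_const_def by blast
  then show thesis using that[of K] by simp
qed

theorem corollary4p3:
  fixes A :: "int \<Rightarrow> ('a::banach \<Rightarrow>\<^sub>L 'a)" and c D r :: real
  assumes "\<forall>m. binvertible (A m)"
    and "bdd_above (range (\<lambda>m. norm (A m)))"
    and "exp_dichotomy A"
    and "admissible_const A c"
    and "D > 0" and "r > 0"
  shows "\<exists>\<delta>>0. \<forall>(g :: int \<Rightarrow> 'a \<Rightarrow> 'a) (dg :: int \<Rightarrow> 'a \<Rightarrow> ('a \<Rightarrow>\<^sub>L 'a)) (y :: int \<Rightarrow> 'a).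
           (\<forall>n x. (g n has_derivative blinfun_apply (dg n x)) (at x)) \<and>
           (\<forall>n x. norm (dg n x) \<le> c / 2) \<and>
           (\<forall>n x z. norm (dg n x - dg n z) \<le> D * norm (x - z) powr r) \<and>
           (\<forall>n x. norm (g n x) \<le> \<delta>) \<and>
           (\<forall>n. y (n + 1) = A n (y n) + g n (y n)) \<and>
           growth_rate y > 0
           \<longrightarrow> (\<exists>x :: int \<Rightarrow> 'a. (\<forall>n. x (n + 1) = A n (x n)) \<and> growth_rate x = growth_rate y)"
proof (intro exI[of _ 1] conjI allI impI)
  obtain K where K: "linf_invertible A K"
    using assms(4) by (rule admissible_const_linf_invertible)
  fix g :: "int \<Rightarrow> 'a \<Rightarrow> 'a" and dg :: "int \<Rightarrow> 'a \<Rightarrow> ('a \<Rightarrow>\<^sub>L 'a)" and y :: "int \<Rightarrow> 'a"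
  assume H: "(\<forall>n x. (g n has_derivative blinfun_apply (dg n x)) (at x)) \<and>
           (\<forall>n x. norm (dg n x) \<le> c / 2) \<and>
           (\<forall>n x z. norm (dg n x - dg n z) \<le> D * norm (x - z) powr r) \<and>
           (\<forall>n x. norm (g n x) \<le> 1) \<and>
           (\<forall>n. y (n + 1) = A n (y n) + g n (y n)) \<and>
           growth_rate y > 0"
  then have "bounded (range (\<lambda>n. g n (y n)))" unfolding bounded_iff by blast
  with K obtain x where "\<And>n. x (n + 1) = A n (x n)" "bounded (range (\<lambda>n. x n - y n))"
    using H by (elim linf_invertible_shadowing_orbit) auto
  then show "\<exists>x. (\<forall>n. x (n + 1) = A n (x n)) \<and> growth_rate x = growth_rate y"
    using H growth_rate_eq_if_bounded_diff by blast
qed simp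

end
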